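(* Let $G=(V,E)$ be a claw-free graph and $I$ a maximum cardinality independent set of $G$. Let $a,b\in I$, $a\ne b$, and let $X$ be a pack different from $V_{a,b}$. If there is an edge of $G$ with one endpoint in $V_{a,b}$ and the other in $X$, then $X$ and $V_{a,b}$ have a common leg, i.e., $X=V_a$ or $X=V_b$ or $X=V_{a,c}$ or $X=V_{b,c}$ for some $c\in I$.
   Context: Graphs are finite, simple, undirected; claw-free means no induced $K_{1,3}$. For $a\ne b$ in $I$ let $V_{a,b}=V_{b,a}=\{v\in V\setminus I: N(v)\cap I=\{a,b\}\}$, and for $a\in I$ let $V_a=\{v\in V\setminus I : N(v)\cap I=\{a\}\}$. These sets are called packs: the $V_a$ are $1$-packs with leg $a$, the $V_{a,b}$ are $2$-packs with legs $a$ and $b$. (Every vertex of $V\setminus I$ has one or two neighbours in $I$, so the packs partition $V\setminus I$.) *)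

theory Defs
  imports Main
begin

definition simple_graph :: "'a set \<Rightarrow> ('a \<Rightarrow> 'a \<Rightarrow> bool) \<Rightarrow> bool" where
  "simple_graph V E \<longleftrightarrow> finite V
     \<and> (\<forall>u v. E u v \<longrightarrow> u \<in> V \<and> v \<in> V)
     \<and> (\<forall>u v. E u v \<longrightarrow> E v u)
     \<and> (\<forall>v. \<not> E v v)"

definition claw_free :: "'a set \<Rightarrow> ('a \<Rightarrow> 'a \<Rightarrow> bool) \<Rightarrow> bool" where
  "claw_free V E \<longleftrightarrow> \<not> (\<exists>x\<in>V. \<exists>y\<in>V. \<exists>z\<in>V. \<exists>w\<in>V.
      y \<noteq> z \<and> y \<noteq> w \<and> z \<noteq> w \<and>
      E x y \<and> E x z \<and> E x w \<and> \<not> E y z \<and> \<not> E y w \<and> \<not> E z w)"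

definition independent_set :: "'a set \<Rightarrow> ('a \<Rightarrow> 'a \<Rightarrow> bool) \<Rightarrow> 'a set \<Rightarrow> bool" where
  "independent_set V E I \<longleftrightarrow> I \<subseteq> V \<and> (\<forall>x\<in>I. \<forall>y\<in>I. \<not> E x y)"

definition max_independent_set :: "'a set \<Rightarrow> ('a \<Rightarrow> 'a \<Rightarrow> bool) \<Rightarrow> 'a set \<Rightarrow> bool" where
  "max_independent_set V E I \<longleftrightarrow> independent_set V E I
     \<and> (\<forall>J. independent_set V E J \<longrightarrow> card J \<le> card I)"

definition nbh :: "('a \<Rightarrow> 'a \<Rightarrow> bool) \<Rightarrow> 'a \<Rightarrow> 'a set" where
  "nbh E v = {u. E v u}"

definition pack1 :: "'a set \<Rightarrow> ('a \<Rightarrow> 'a \<Rightarrow> bool) \<Rightarrow> 'a set \<Rightarrow> 'a \<Rightarrow> 'a set" where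
  "pack1 V E I a = {v \<in> V - I. nbh E v \<inter> I = {a}}"

definition pack2 :: "'a set \<Rightarrow> ('a \<Rightarrow> 'a \<Rightarrow> bool) \<Rightarrow> 'a set \<Rightarrow> 'a \<Rightarrow> 'a \<Rightarrow> 'a set" where
  "pack2 V E I a b = {v \<in> V - I. nbh E v \<inter> I = {a, b}}"

definition is_pack :: "'a set \<Rightarrow> ('a \<Rightarrow> 'a \<Rightarrow> bool) \<Rightarrow> 'a set \<Rightarrow> 'a set \<Rightarrow> bool" where
  "is_pack V E I X \<longleftrightarrow> (\<exists>c\<in>I. X = pack1 V E I c)
     \<or> (\<exists>c\<in>I. \<exists>d\<in>I. c \<noteq> d \<and> X = pack2 V E I c d)"

end

theory Submission
  imports Defs
begin

text \<open>An edge from a vertex u of V_{a,b} to a vertex w outside I forces w to be adjacent to a or b,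
  since otherwise u, a, b, w would be a claw centred at u. A pack adjacent to the leg a has a as
  one of its own legs.\<close>

lemma pack2_commute: "pack2 V E I a b = pack2 V E I b a"
  unfolding pack2_def by (auto simp: insert_commute)

lemma claw_freeD:
  assumes "claw_free V E" and "x \<in> V" "y \<in> V" "z \<in> V" "w \<in> V"
    and "y \<noteq> z" "y \<noteq> w" "z \<noteq> w" and "E x y" "E x z" "E x w"
  shows "E y z \<or> E y w \<or> E z w"
  using assms unfolding claw_free_def by blast

lemma pack_not_in_independent_set:
  assumes "is_pack V E I X" and "w \<in> X"
  shows "w \<notin> I"
  using assms unfolding is_pack_def pack1_def pack2_def by auto

lemma pack2_neighbour_adjacent_to_leg:
  assumes "simple_graph V E" and "claw_free V E" and "independent_set V E I"
    and "a \<in> I" "b \<in> I" "a \<noteq> b"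
    and "u \<in> pack2 V E I a b" and "E u w" and "w \<notin> I"
  shows "E w a \<or> E w b"
proof -
  have sym: "\<And>x y. E x y \<Longrightarrow> E y x" and inV: "\<And>x y. E x y \<Longrightarrow> x \<in> V \<and> y \<in> V"
    using assms(1) unfolding simple_graph_def by blast+
  have "\<not> E a b" using assms(3-5) unfolding independent_set_def by blast
  have "E u a" "E u b" using assms(7) unfolding pack2_def nbh_def by auto
  moreover have "w \<noteq> a" "w \<noteq> b" using assms(4,5,9) by auto
  moreover have "u \<in> V" "w \<in> V" using inV assms(8) by blast+
  moreover have "a \<in> V" "b \<in> V" using inV \<open>E u a\<close> \<open>E u b\<close> by blast+
  ultimately have "E a b \<or> E a w \<or> E b w"
    using claw_freeD[OF assms(2), of u a b w] assms(6,8) by blast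
  with \<open>\<not> E a b\<close> show ?thesis using sym by blast
qed

lemma pack_adjacent_to_leg:
  assumes "is_pack V E I X" and "w \<in> X" and "a \<in> I" and "E w a"
  shows "X = pack1 V E I a \<or> (\<exists>c\<in>I. c \<noteq> a \<and> X = pack2 V E I a c)"
proof -
  have leg: "a \<in> nbh E w \<inter> I" using assms(3,4) unfolding nbh_def by blast
  from assms(1) consider c where "c \<in> I" "X = pack1 V E I c"
    | c d where "c \<in> I" "d \<in> I" "c \<noteq> d" "X = pack2 V E I c d"
    unfolding is_pack_def by blast
  then show ?thesis
  proof cases
    case (1 c)
    then have "a = c" using leg assms(2) unfolding pack1_def by auto
    with 1 show ?thesis by blast
  next
    case (2 c d)
    then have "a = c \<or> a = d" using leg assms(2) unfolding pack2_def by auto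
    with 2 show ?thesis using pack2_commute by metis
  qed
qed

theorem lemma5:
  fixes V :: "'a set" and E :: "'a \<Rightarrow> 'a \<Rightarrow> bool" and I X :: "'a set" and a b :: 'a
  assumes "simple_graph V E"
    and "claw_free V E"
    and "max_independent_set V E I"
    and "a \<in> I" and "b \<in> I" and "a \<noteq> b"
    and "is_pack V E I X"
    and "X \<noteq> pack2 V E I a b"
    and "\<exists>u\<in>pack2 V E I a b. \<exists>w\<in>X. E u w"
  shows "X = pack1 V E I a \<or> X = pack1 V E I b
         \<or> (\<exists>c\<in>I. (c \<noteq> a \<and> X = pack2 V E I a c) \<or> (c \<noteq> b \<and> X = pack2 V E I b c))"
proof -
  obtain u w where u: "u \<in> pack2 V E I a b" and w: "w \<in> X" and "E u w"
    using assms(9) by blast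
  have "independent_set V E I"
    using assms(3) unfolding max_independent_set_def by blast
  moreover have "w \<notin> I" using pack_not_in_independent_set[OF assms(7) w] .
  ultimately have "E w a \<or> E w b"
    using pack2_neighbour_adjacent_to_leg[OF assms(1,2) _ assms(4-6) u \<open>E u w\<close>] by blast
  then show ?thesis
    using pack_adjacent_to_leg[OF assms(7) w] assms(4,5) by blast
qed

end
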